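(* Let $T$ be a tree of order at least $6$ in which the set $S'(T)$ of weak support vertices is a maximum $2$-packing. Then $T$ has no strong support vertex.
   Context: A leaf is a vertex of degree $1$; a weak support vertex is a vertex adjacent to exactly one leaf, and a strong support vertex is a vertex adjacent to at least two leaves. A $2$-packing is a set of vertices pairwise at distance at least $3$; a maximum $2$-packing is one of maximum cardinality. *)

theory Defs
  imports Main
begin

definition simple_graph :: "'a set \<Rightarrow> ('a \<Rightarrow> 'a \<Rightarrow> bool) \<Rightarrow> bool" where
  "simple_graph V E \<longleftrightarrow> finite V \<and> (\<forall>u v. E u v \<longrightarrow> u \<in> V \<and> v \<in> V)
     \<and> (\<forall>u v. E u v \<longrightarrow> E v u) \<and> (\<forall>v. \<not> E v v)"

definition neighbors :: "'a set \<Rightarrow> ('a \<Rightarrow> 'a \<Rightarrow> bool) \<Rightarrow> 'a \<Rightarrow> 'a set" where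
  "neighbors V E v = {u \<in> V. E v u}"

definition degree :: "'a set \<Rightarrow> ('a \<Rightarrow> 'a \<Rightarrow> bool) \<Rightarrow> 'a \<Rightarrow> nat" where
  "degree V E v = card (neighbors V E v)"

definition walk :: "'a set \<Rightarrow> ('a \<Rightarrow> 'a \<Rightarrow> bool) \<Rightarrow> 'a list \<Rightarrow> bool" where
  "walk V E xs \<longleftrightarrow> xs \<noteq> [] \<and> set xs \<subseteq> V \<and> (\<forall>i. Suc i < length xs \<longrightarrow> E (xs ! i) (xs ! Suc i))"

definition connected_graph :: "'a set \<Rightarrow> ('a \<Rightarrow> 'a \<Rightarrow> bool) \<Rightarrow> bool" where
  "connected_graph V E \<longleftrightarrow> (\<forall>u\<in>V. \<forall>v\<in>V. \<exists>xs. walk V E xs \<and> hd xs = u \<and> last xs = v)"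

definition is_cycle :: "'a set \<Rightarrow> ('a \<Rightarrow> 'a \<Rightarrow> bool) \<Rightarrow> 'a list \<Rightarrow> bool" where
  "is_cycle V E xs \<longleftrightarrow> walk V E xs \<and> length xs \<ge> 3 \<and> distinct xs \<and> E (last xs) (hd xs)"

definition tree :: "'a set \<Rightarrow> ('a \<Rightarrow> 'a \<Rightarrow> bool) \<Rightarrow> bool" where
  "tree V E \<longleftrightarrow> simple_graph V E \<and> V \<noteq> {} \<and> connected_graph V E \<and> (\<nexists>xs. is_cycle V E xs)"

definition dist :: "'a set \<Rightarrow> ('a \<Rightarrow> 'a \<Rightarrow> bool) \<Rightarrow> 'a \<Rightarrow> 'a \<Rightarrow> nat" where
  "dist V E u v = (LEAST n. \<exists>xs. walk V E xs \<and> hd xs = u \<and> last xs = v \<and> length xs = Suc n)"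

definition is_leaf :: "'a set \<Rightarrow> ('a \<Rightarrow> 'a \<Rightarrow> bool) \<Rightarrow> 'a \<Rightarrow> bool" where
  "is_leaf V E v \<longleftrightarrow> v \<in> V \<and> degree V E v = 1"

definition weak_support :: "'a set \<Rightarrow> ('a \<Rightarrow> 'a \<Rightarrow> bool) \<Rightarrow> 'a \<Rightarrow> bool" where
  "weak_support V E v \<longleftrightarrow> v \<in> V \<and> card {u \<in> neighbors V E v. is_leaf V E u} = 1"

definition strong_support :: "'a set \<Rightarrow> ('a \<Rightarrow> 'a \<Rightarrow> bool) \<Rightarrow> 'a \<Rightarrow> bool" where
  "strong_support V E v \<longleftrightarrow> v \<in> V \<and> card {u \<in> neighbors V E v. is_leaf V E u} \<ge> 2"

definition weak_supports :: "'a set \<Rightarrow> ('a \<Rightarrow> 'a \<Rightarrow> bool) \<Rightarrow> 'a set" where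
  "weak_supports V E = {v \<in> V. weak_support V E v}"

definition two_packing :: "'a set \<Rightarrow> ('a \<Rightarrow> 'a \<Rightarrow> bool) \<Rightarrow> 'a set \<Rightarrow> bool" where
  "two_packing V E S \<longleftrightarrow> S \<subseteq> V \<and> (\<forall>u\<in>S. \<forall>v\<in>S. u \<noteq> v \<longrightarrow> dist V E u v \<ge> 3)"

definition max_two_packing :: "'a set \<Rightarrow> ('a \<Rightarrow> 'a \<Rightarrow> bool) \<Rightarrow> 'a set \<Rightarrow> bool" where
  "max_two_packing V E S \<longleftrightarrow> two_packing V E S \<and> (\<forall>S'. two_packing V E S' \<longrightarrow> card S' \<le> card S)"

end

theory Submission
  imports Defs
begin

text \<open>
  Let \<open>S\<close> be the set of weak support vertices and let \<open>v\<close> be a strong support vertex with a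
  leaf \<open>a\<close>. Neither \<open>v\<close> nor any leaf lies in \<open>S\<close>, and a leaf is within distance 2 only of
  its support vertex and that vertex's neighbours. Hence if no vertex of \<open>S\<close> is adjacent to
  \<open>v\<close>, then \<open>S \<union> {a}\<close> is a 2-packing; otherwise some \<open>w \<in> S\<close> is adjacent to \<open>v\<close>, and
  replacing \<open>w\<close> by \<open>a\<close> and the leaf \<open>c\<close> of \<open>w\<close> gives a larger 2-packing. Either way \<open>S\<close>
  is not maximum.
\<close>

definition near :: "('a \<Rightarrow> 'a \<Rightarrow> bool) \<Rightarrow> 'a \<Rightarrow> 'a \<Rightarrow> bool" where
  "near E x y \<longleftrightarrow> x = y \<or> E x y \<or> (\<exists>z. E x z \<and> E z y)"

lemma near_sym:
  assumes "simple_graph V E" "near E x y"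
  shows "near E y x"
  using assms unfolding near_def simple_graph_def by blast

lemma walk_length_le_3_near:
  assumes "walk V E xs" "length xs \<le> 3"
  shows "near E (hd xs) (last xs)"
proof -
  have step: "\<And>i. Suc i < length xs \<Longrightarrow> E (xs ! i) (xs ! Suc i)" and "xs \<noteq> []"
    using assms(1) by (auto simp: walk_def)
  then consider x where "xs = [x]" | x y where "xs = [x, y]" | x y z where "xs = [x, y, z]"
    using assms(2) by (cases xs; cases "tl xs"; cases "tl (tl xs)") auto
  then show ?thesis
  proof cases
    case (3 x y z)
    then show ?thesis using step[of 0] step[of 1] by (auto simp: near_def)
  qed (use step[of 0] in \<open>auto simp: near_def\<close>)
qed

lemma dist_less_3_iff_near:
  assumes "simple_graph V E" "connected_graph V E" "x \<in> V" "y \<in> V"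
  shows "dist V E x y < 3 \<longleftrightarrow> near E x y"
proof -
  let ?P = "\<lambda>n. \<exists>xs. walk V E xs \<and> hd xs = x \<and> last xs = y \<and> length xs = Suc n"
  show ?thesis
  proof
    obtain xs where "walk V E xs" "hd xs = x" "last xs = y"
      using assms unfolding connected_graph_def by blast
    then have "?P (length xs - 1)" by (auto simp: walk_def)
    then have "?P (dist V E x y)" unfolding dist_def by (rule LeastI)
    then show "dist V E x y < 3 \<Longrightarrow> near E x y"
      using walk_length_le_3_near by fastforce
  next
    have inV: "\<And>u w. E u w \<Longrightarrow> u \<in> V \<and> w \<in> V" using assms(1) by (simp add: simple_graph_def)
    assume "near E x y"
    then have "\<exists>n<3. ?P n"
    proof (unfold near_def, elim disjE exE conjE)
      assume "x = y"
      then show ?thesis using assms by (intro exI[of _ 0], auto intro!: exI[of _ "[x]"] simp: walk_def)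
    next
      assume "E x y"
      then show ?thesis using inV
        by (intro exI[of _ 1], auto intro!: exI[of _ "[x, y]"] simp: walk_def less_Suc_eq)
    next
      fix z assume "E x z" "E z y"
      then show ?thesis using inV
        by (intro exI[of _ 2], auto intro!: exI[of _ "[x, z, y]"]
            simp: walk_def less_Suc_eq nth_Cons split: nat.splits)
    qed
    then obtain n where "n < 3" "?P n" by blast
    from \<open>?P n\<close> have "(LEAST n. ?P n) \<le> n" by (rule Least_le)
    then show "dist V E x y < 3" unfolding dist_def using \<open>n < 3\<close> by linarith
  qed
qed

lemma two_packing_iff_pairwise_not_near:
  assumes "simple_graph V E" "connected_graph V E"
  shows "two_packing V E S \<longleftrightarrow> S \<subseteq> V \<and> pairwise (\<lambda>x y. \<not> near E x y) S"
  using dist_less_3_iff_near[OF assms]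
  unfolding two_packing_def pairwise_def by (meson not_le subsetD)

lemma two_packing_insert:
  assumes "simple_graph V E" "connected_graph V E" "two_packing V E T" "x \<in> V"
    and "\<And>u. u \<in> T \<Longrightarrow> u \<noteq> x \<Longrightarrow> \<not> near E x u"
  shows "two_packing V E (insert x T)"
  using assms near_sym[OF assms(1)]
  by (auto simp: two_packing_iff_pairwise_not_near[OF assms(1,2)] pairwise_insert)

lemma leaf_neighbor_unique:
  assumes "simple_graph V E" "is_leaf V E a" "E a x" "E a y"
  shows "x = y"
proof -
  obtain w where "neighbors V E a = {w}"
    using assms(2) card_1_singletonE unfolding is_leaf_def degree_def by blast
  moreover have "x \<in> neighbors V E a" "y \<in> neighbors V E a"
    using assms unfolding neighbors_def simple_graph_def by auto
  ultimately show ?thesis by auto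
qed

lemma leaf_of_non_leaf_not_weak_support:
  assumes "simple_graph V E" "is_leaf V E a" "E a v" "\<not> is_leaf V E v"
  shows "\<not> weak_support V E a"
proof -
  have "{u \<in> neighbors V E a. is_leaf V E u} = {}"
    using assms leaf_neighbor_unique[OF assms(1,2)] by (auto simp: neighbors_def)
  then have "card {u \<in> neighbors V E a. is_leaf V E u} = 0" by (simp only: card.empty)
  then show ?thesis by (simp add: weak_support_def)
qed

lemma leaf_not_near_weak_support:
  assumes "simple_graph V E" "is_leaf V E a" "E a v" "\<not> is_leaf V E v"
    and "weak_support V E u" "u \<noteq> v" "\<not> E v u"
  shows "\<not> near E a u"
  using assms leaf_of_non_leaf_not_weak_support[OF assms(1-4)]
    leaf_neighbor_unique[OF assms(1,2)] unfolding near_def by metis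

lemma leaves_not_near:
  assumes "simple_graph V E" "is_leaf V E a" "is_leaf V E c" "E a v" "E c w"
    and "v \<noteq> w" "\<not> is_leaf V E v"
  shows "\<not> near E a c"
proof -
  have "E v c \<Longrightarrow> v = w" "E c a \<Longrightarrow> v = c"
    using assms leaf_neighbor_unique[OF assms(1,3)] leaf_neighbor_unique[OF assms(1,2)]
    unfolding simple_graph_def by blast+
  then show ?thesis
    using assms leaf_neighbor_unique[OF assms(1,2)] unfolding near_def simple_graph_def by metis
qed

lemma strong_support_leafE:
  assumes "simple_graph V E" "strong_support V E v"
  obtains a where "is_leaf V E a" "E v a" "\<not> is_leaf V E v" "\<not> weak_support V E v"
proof -
  let ?L = "{u \<in> neighbors V E v. is_leaf V E u}"
  have "card ?L \<ge> 2" using assms(2) by (simp add: strong_support_def)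
  moreover have "finite (neighbors V E v)"
    using assms(1) by (simp add: simple_graph_def neighbors_def)
  then have "card ?L \<le> degree V E v" unfolding degree_def by (intro card_mono) auto
  moreover obtain a where "a \<in> ?L" using \<open>card ?L \<ge> 2\<close> by (cases "?L = {}") auto
  ultimately show ?thesis
    using that by (auto simp: is_leaf_def weak_support_def neighbors_def)
qed

lemma weak_support_leafE:
  assumes "weak_support V E w"
  obtains c where "is_leaf V E c" "E w c"
proof -
  obtain c where "{u \<in> neighbors V E w. is_leaf V E u} = {c}"
    using assms card_1_singletonE unfolding weak_support_def by metis
  then show ?thesis using that by (auto simp: neighbors_def)
qed

lemma max_two_packing_strong_support_adjacent_weak_support:
  assumes "simple_graph V E" "connected_graph V E"
    and "max_two_packing V E (weak_supports V E)" "strong_support V E v"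
  shows "\<exists>w. E v w \<and> weak_support V E w"
proof (rule ccontr)
  let ?S = "weak_supports V E"
  assume "\<nexists>w. E v w \<and> weak_support V E w"
  then have isolated: "\<not> E v u" if "u \<in> ?S" for u
    using that by (auto simp: weak_supports_def)
  obtain a where a: "is_leaf V E a" "E v a" "\<not> is_leaf V E v" "\<not> weak_support V E v"
    by (rule strong_support_leafE[OF assms(1,4)])
  have Eav: "E a v" "a \<in> V" using a(2) assms(1) by (auto simp: simple_graph_def)
  have "\<not> near E a u" if "u \<in> ?S" for u
    using leaf_not_near_weak_support[OF assms(1) a(1) Eav(1) a(3)] that isolated a(4)
    by (auto simp: weak_supports_def)
  then have "two_packing V E (insert a ?S)"
    using assms(3) Eav(2) by (intro two_packing_insert[OF assms(1,2)]) (auto simp: max_two_packing_def)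
  moreover have "a \<notin> ?S"
    using leaf_of_non_leaf_not_weak_support[OF assms(1) a(1) Eav(1) a(3)]
    by (simp add: weak_supports_def)
  moreover have "finite ?S" using assms(1) by (simp add: simple_graph_def weak_supports_def)
  ultimately show False using assms(3) unfolding max_two_packing_def by fastforce
qed

lemma max_two_packing_weak_supports_no_strong_support:
  assumes "simple_graph V E" "connected_graph V E"
    and "max_two_packing V E (weak_supports V E)"
  shows "\<not> strong_support V E v"
proof
  let ?S = "weak_supports V E"
  have sym: "\<And>x y. E x y \<Longrightarrow> E y x" and inV: "\<And>x y. E x y \<Longrightarrow> x \<in> V \<and> y \<in> V"
    using assms(1) by (auto simp: simple_graph_def)
  have packing: "?S \<subseteq> V" "pairwise (\<lambda>x y. \<not> near E x y) ?S"
    using assms(3) two_packing_iff_pairwise_not_near[OF assms(1,2)]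
    by (auto simp: max_two_packing_def)
  assume "strong_support V E v"
  then obtain a where a: "is_leaf V E a" "E v a" "\<not> is_leaf V E v" "\<not> weak_support V E v"
    by (rule strong_support_leafE[OF assms(1)])
  obtain w where w: "E v w" "weak_support V E w"
    using max_two_packing_strong_support_adjacent_weak_support[OF assms \<open>strong_support V E v\<close>]
    by blast
  obtain c where c: "is_leaf V E c" "E w c" by (rule weak_support_leafE[OF w(2)])
  have "v \<noteq> w" "v \<noteq> c" using w(1) a(3) c(1) assms(1) by (auto simp: simple_graph_def)
  have w_not_leaf: "\<not> is_leaf V E w"
    using leaf_neighbor_unique[OF assms(1) _ w(1)[THEN sym] c(2)] \<open>v \<noteq> c\<close> by blast
  have wS: "w \<in> ?S" using w(2) inV[OF w(1)] by (simp add: weak_supports_def)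
  text \<open>A vertex of \<open>S - {w}\<close> adjacent to \<open>v\<close> or \<open>w\<close> would be within distance 2 of \<open>w\<close>.\<close>
  have "\<not> E v u" "\<not> E w u" if "u \<in> ?S - {w}" for u
    using that wS packing(2) sym w(1) unfolding pairwise_def near_def by blast+
  then have "\<not> near E a u" "\<not> near E c u" if "u \<in> ?S - {w}" for u
    using that a(4) leaf_not_near_weak_support[OF assms(1) a(1) sym[OF a(2)] a(3)]
      leaf_not_near_weak_support[OF assms(1) c(1) sym[OF c(2)] w_not_leaf]
    by (auto simp: weak_supports_def)
  moreover have a_c: "\<not> near E a c"
    using leaves_not_near[OF assms(1) a(1) c(1) sym[OF a(2)] sym[OF c(2)] \<open>v \<noteq> w\<close> a(3)] .
  moreover have "a \<in> V" "c \<in> V" using inV a(2) c(2) by blast+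
  moreover have "two_packing V E (?S - {w})"
    using assms(3) by (auto simp: max_two_packing_def two_packing_def)
  ultimately have "two_packing V E (insert a (insert c (?S - {w})))"
    by (intro two_packing_insert[OF assms(1,2)]) auto
  moreover have "a \<notin> ?S" "c \<notin> ?S" "a \<noteq> c"
    using leaf_of_non_leaf_not_weak_support[OF assms(1) a(1) sym[OF a(2)] a(3)]
      leaf_of_non_leaf_not_weak_support[OF assms(1) c(1) sym[OF c(2)] w_not_leaf]
      a_c
    by (auto simp: weak_supports_def near_def)
  moreover have "finite ?S" using assms(1) by (simp add: simple_graph_def weak_supports_def)
  ultimately have "card (insert a (insert c (?S - {w}))) > card ?S"
    using wS by (simp add: card_Suc_Diff1)
  then show False
    using assms(3) \<open>two_packing V E (insert a (insert c (?S - {w})))\<close>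
    unfolding max_two_packing_def by (meson not_le)
qed

theorem claim1:
  fixes V :: "'a set" and E :: "'a \<Rightarrow> 'a \<Rightarrow> bool"
  assumes "tree V E"
    and "card V \<ge> 6"
    and "max_two_packing V E (weak_supports V E)"
  shows "\<not> (\<exists>v\<in>V. strong_support V E v)"
proof -
  have "simple_graph V E" "connected_graph V E" using assms(1) by (auto simp: tree_def)
  from max_two_packing_weak_supports_no_strong_support[OF this assms(3)] show ?thesis by blast
qed

end
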